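(* Let $f$ be a perfect $2$-coloring of $H(n,q)$ with quotient matrix $\begin{pmatrix} a & b\\ c& d\end{pmatrix}$ such that the set of vertices of color $1$ can be partitioned into $k$-faces. If there exists a $1$-perfect code in $H(q+1,q)$, then there exist perfect $(q+1)$-colorings $g'$ and $g''$ of $H(qn,q)$ with quotient matrices $T'=(t'_{i,j})$ and $T''=(t''_{i,j})$, $i,j\in\{1,\dots,q+1\}$, where for $1\le i,j\le q$: $t'_{i,i}=a-k(q-1)$, $t'_{i,j}=a+k$ ($i\ne j$), $t''_{i,i}=a+k(q-1)^2$, $t''_{i,j}=a-k(q-1)$ ($i\ne j$); and in both matrices the entries $(i,q+1)$ for $i\le q$ equal $qb$, the entries $(q+1,j)$ for $j\le q$ equal $c$, and the entry $(q+1,q+1)$ equals $qd$.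
   Context: The Hamming graph $H(n,q)$ has vertex set $\mathbb{Z}_q^n$, two vertices adjacent iff they differ in exactly one coordinate. A $k$-face of $H(n,q)$ is a set of vertices obtained by fixing the values of $n-k$ coordinates and letting the remaining $k$ coordinates range over $\mathbb{Z}_q$. A perfect $r$-coloring is a surjective map from the vertex set onto $\{1,\dots,r\}$ such that every vertex of color $i$ has exactly $s_{i,j}$ neighbours of color $j$; $(s_{i,j})$ is its quotient matrix. A $1$-perfect code in $H(n,q)$ is a set $C$ of vertices such that every radius-$1$ Hamming ball contains exactly one element of $C$. *)

theory Defs
  imports Main
begin

text \<open>Vertices of H(n,q): words of length n over {0..<q} (representing Z_q).\<close>
definition hverts :: "nat \<Rightarrow> nat \<Rightarrow> nat list set" where
  "hverts n q = {x. length x = n \<and> set x \<subseteq> {0..<q}}"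

definition hdist :: "nat list \<Rightarrow> nat list \<Rightarrow> nat" where
  "hdist x y = card {i. i < length x \<and> x ! i \<noteq> y ! i}"

definition hadj :: "nat list \<Rightarrow> nat list \<Rightarrow> bool" where
  "hadj x y \<longleftrightarrow> length x = length y \<and> hdist x y = 1"

definition is_face :: "nat \<Rightarrow> nat \<Rightarrow> nat \<Rightarrow> nat list set \<Rightarrow> bool" where
  "is_face n q k F \<longleftrightarrow> (\<exists>K v. K \<subseteq> {0..<n} \<and> card K = k \<and> v \<in> hverts n q \<and>
      F = {x \<in> hverts n q. \<forall>i<n. i \<notin> K \<longrightarrow> x ! i = v ! i})"

definition perfect_coloring ::
  "nat \<Rightarrow> nat \<Rightarrow> nat \<Rightarrow> (nat list \<Rightarrow> nat) \<Rightarrow> (nat \<Rightarrow> nat \<Rightarrow> int) \<Rightarrow> bool" where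
  "perfect_coloring n q r f S \<longleftrightarrow>
     f ` hverts n q = {1..r} \<and>
     (\<forall>x\<in>hverts n q. \<forall>j\<in>{1..r}.
        int (card {y \<in> hverts n q. hadj x y \<and> f y = j}) = S (f x) j)"

definition partitionable_into_faces ::
  "nat \<Rightarrow> nat \<Rightarrow> nat \<Rightarrow> nat list set \<Rightarrow> bool" where
  "partitionable_into_faces n q k A \<longleftrightarrow>
     (\<exists>P. (\<forall>F\<in>P. is_face n q k F) \<and>
          (\<forall>F\<in>P. \<forall>G\<in>P. F \<noteq> G \<longrightarrow> F \<inter> G = {}) \<and> \<Union>P = A)"

definition perfect_code :: "nat \<Rightarrow> nat \<Rightarrow> nat list set \<Rightarrow> bool" where
  "perfect_code n q C \<longleftrightarrow> C \<subseteq> hverts n q \<and>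
     (\<forall>x\<in>hverts n q. card {c \<in> C. hdist x c \<le> 1} = 1)"

end

theory Submission
  imports Defs "HOL-Number_Theory.Cong"
begin

text \<open>
  A 1-perfect code in \<open>H(q+1, q)\<close> has minimum distance 3 and \<open>q ^ (q - 1)\<close> words, so every word of
  length \<open>q - 1\<close> extends to exactly one codeword. Extending the first \<open>q - 1\<close> letters of a block
  \<open>w \<in> \<int>\<^sub>q\<^sup>q\<close> gives a label \<open>h w\<close> (the deviation of \<open>w\<close> from its codeword at position \<open>q - 1\<close>) and
  a shift \<open>\<sigma> w\<close> (the last letter of the codeword): \<open>h\<close> takes every value exactly once on every
  line of \<open>H(q, q)\<close>, and \<open>\<sigma>\<close> takes every value exactly once on the neighbours of \<open>w\<close> with a
  prescribed label \<open>u \<noteq> h w\<close>.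

  Cut a vertex \<open>x\<close> of \<open>H(qn, q)\<close> into \<open>n\<close> blocks and collapse each block to its label, giving
  a vertex \<open>y\<close> of \<open>H(n, q)\<close>; every neighbour of \<open>y\<close> is the image of exactly \<open>q\<close> neighbours of \<open>x\<close>.
  Vertices over colour 2 get the new colour \<open>q + 1\<close>; a vertex over a face of colour 1 with
  free coordinates \<open>K\<close> gets \<open>1 + (e \<Sum>\<^sub>l\<^sub>\<in>\<^sub>K h + \<Sum>\<^sub>l\<^sub>\<notin>\<^sub>K \<sigma>) mod q\<close>. Changing a block outside \<open>K\<close>
  leads to colour 2 or to a face in which that coordinate is fixed, and the shift spreads the
  \<open>q\<close> preimages evenly over the colours \<open>1..q\<close>; changing a block in \<open>K\<close> stays in the face, and
  the new colour is determined by \<open>e\<close> times the new label. Counting both kinds of neighbours gives \<open>T'\<close> for \<open>e = 1\<close> and \<open>T''\<close> for \<open>e = 0\<close>.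
\<close>

lemma bij_betw_if_inj_on_card_eq:
  assumes "inj_on f A" "f ` A \<subseteq> B" "finite B" "card A = card B"
  shows "bij_betw f A B"
proof -
  have "card (f ` A) = card B" using assms(1,4) by (simp add: card_image)
  then show ?thesis using assms by (simp add: bij_betw_def card_subset_eq)
qed

lemma card_filter_bij_betw:
  assumes "bij_betw \<phi> A B"
  shows "card {z\<in>A. Q (\<phi> z)} = card {s\<in>B. Q s}"
proof -
  have "bij_betw \<phi> {z\<in>A. Q (\<phi> z)} {s\<in>B. Q s}"
    using assms unfolding bij_betw_def inj_on_def by auto
  then show ?thesis by (rule bij_betw_same_card)
qed

lemma bij_betw_add_mod:
  assumes "0 < (q::nat)"
  shows "bij_betw (\<lambda>s. (s + r) mod q) {..<q} {..<q}"
proof -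
  have "inj_on (\<lambda>s. (s + r) mod q) {..<q}"
  proof (rule inj_onI)
    fix s s' assume "s \<in> {..<q}" "s' \<in> {..<q}" "(s + r) mod q = (s' + r) mod q"
    then have "[s + r = s' + r] (mod q)" by (simp add: cong_def)
    with \<open>s \<in> {..<q}\<close> \<open>s' \<in> {..<q}\<close> show "s = s'"
      by (simp add: cong_add_rcancel_nat cong_less_modulus_unique_nat)
  qed
  moreover have "(\<lambda>s. (s + r) mod q) ` {..<q} \<subseteq> {..<q}" using assms by auto
  ultimately show ?thesis by (simp add: bij_betw_if_inj_on_card_eq)
qed

lemma card_shifted_colours:
  "card {u\<in>{..<q}. 1 + u = t} = of_bool (1 \<le> t \<and> t \<le> (q::nat))"
proof (cases "1 \<le> t \<and> t \<le> q")
  case True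
  then have "{u\<in>{..<q}. 1 + u = t} = {t - 1}" by auto
  then show ?thesis using True by simp
qed auto

lemma card_add_mod_colours:
  assumes "0 < (q::nat)"
  shows "card {u\<in>{..<q}. 1 + (u + R) mod q = t} = of_bool (1 \<le> t \<and> t \<le> q)"
proof -
  have "card {u\<in>{..<q}. 1 + (u + R) mod q = t} = card {s\<in>{..<q}. 1 + s = t}"
    by (rule card_filter_bij_betw[OF bij_betw_add_mod[OF assms]])
  then show ?thesis by (simp only: card_shifted_colours)
qed

lemma add_diff_mod_inj_left:
  assumes "x < q" "y < (q::nat)" "c \<le> q" "(x + q - c) mod q = (y + q - c) mod q"
  shows "x = y"
proof -
  have "[x + (q - c) = y + (q - c)] (mod q)" using assms by (simp add: cong_def)
  then show ?thesis using assms(1,2) by (simp add: cong_add_rcancel_nat cong_less_modulus_unique_nat)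
qed

lemma add_diff_mod_inj_right:
  assumes "x < q" "c < (q::nat)" "(w + q - x) mod q = (w + q - c) mod q"
  shows "x = c"
proof -
  have "[(w + q - x) + (x + c) = (w + q - c) + (x + c)] (mod q)"
    using assms(3) by (intro cong_add) (simp_all add: cong_def)
  then have "[(w + q) + c = (w + q) + x] (mod q)" using assms(1,2) by (simp add: add.assoc)
  then have "[x = c] (mod q)" by (simp add: cong_add_lcancel_nat cong_sym_eq)
  then show ?thesis using assms(1,2) by (rule cong_less_modulus_unique_nat)
qed

lemma sum_blocks: "(\<Sum>i<q*n. g i) = (\<Sum>l<n. \<Sum>j<q. g (l*q+j::nat))"
proof -
  have "(\<Sum>j<q. g (l*q+j)) = sum g {l*q..<l*q+q}" for l
    using sum.shift_bounds_nat_ivl[of g 0 "l*q" q] by (simp add: atLeast0LessThan add.commute)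
  then show ?thesis by (simp add: sum.nat_group mult.commute)
qed

lemma card_eq_sum_card_fibres:
  "finite A \<Longrightarrow> g ` A \<subseteq> B \<Longrightarrow> finite B \<Longrightarrow> card A = (\<Sum>b\<in>B. card {a\<in>A. g a = b})"
  using sum.group[of A B g "\<lambda>_. 1::nat"] by simp

lemma block_index_eq_iff:
  assumes "j < q" "j' < (q::nat)"
  shows "l * q + j = l' * q + j' \<longleftrightarrow> l = l' \<and> j = j'"
proof
  assume eq: "l * q + j = l' * q + j'"
  have "(l * q + j) div q = l" "(l' * q + j') div q = l'" using assms by simp_all
  with eq assms show "l = l' \<and> j = j'" by auto
qed simp

lemma block_index_less: "l < n \<Longrightarrow> j < q \<Longrightarrow> l * q + j < q * (n::nat)"
proof -
  assume "l < n" "j < q"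
  then have "l * q + j < (l + 1) * q" by simp
  also have "\<dots> \<le> n * q" using \<open>l < n\<close> by (intro mult_le_mono1) simp
  finally show ?thesis by (simp add: mult.commute)
qed

lemma hverts_iff: "x \<in> hverts m q \<longleftrightarrow> length x = m \<and> (\<forall>i<m. x!i < q)"
  unfolding hverts_def by (auto simp: set_conv_nth)

lemma list_update_in_hverts: "x \<in> hverts m q \<Longrightarrow> v < q \<Longrightarrow> x[i:=v] \<in> hverts m q"
  by (cases "i < length x") (auto simp: hverts_iff nth_list_update)

lemma hdist_le_1_iff: "hdist x y \<le> 1 \<longleftrightarrow> (\<exists>s. \<forall>i<length x. i \<noteq> s \<longrightarrow> x!i = y!i)"
proof -
  let ?D = "{i. i < length x \<and> x!i \<noteq> y!i}"
  have "hdist x y \<le> 1 \<longleftrightarrow> (\<forall>i\<in>?D. \<forall>i'\<in>?D. i = i')"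
    unfolding hdist_def by (simp add: card_le_Suc0_iff_eq)
  also have "\<dots> \<longleftrightarrow> (\<exists>s. ?D \<subseteq> {s})" by blast
  finally show ?thesis by blast
qed

lemma hadj_list_update:
  assumes "y \<in> hverts m q" "i < m" "v \<noteq> y!i"
  shows "hadj y (y[i:=v])"
proof -
  have "length y = m" using assms(1) by (simp add: hverts_iff)
  then have "{j. j < length y \<and> y!j \<noteq> y[i:=v]!j} = {i}"
    using assms(2,3) by (auto simp: nth_list_update)
  then show ?thesis by (simp add: hadj_def hdist_def)
qed

lemma hadj_imp_list_update:
  assumes "y \<in> hverts m q" "y' \<in> hverts m q" "hadj y y'"
  shows "\<exists>i<m. y'!i \<noteq> y!i \<and> y' = y[i:=y'!i]"
proof -
  have len: "length y = m" "length y' = m" using assms(1,2) by (auto simp: hverts_iff)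
  have "card {j. j < m \<and> y!j \<noteq> y'!j} = 1" using assms(3) len by (simp add: hadj_def hdist_def)
  then obtain i where D: "{j. j < m \<and> y!j \<noteq> y'!j} = {i}" by (rule card_1_singletonE)
  then have "i \<in> {j. j < m \<and> y!j \<noteq> y'!j}" by blast
  then have i: "i < m" "y'!i \<noteq> y!i" by simp_all
  have "y' = y[i:=y'!i]"
  proof (rule nth_equalityI)
    show "length y' = length (y[i:=y'!i])" using len by simp
    fix j assume j: "j < length y'"
    show "y'!j = y[i:=y'!i]!j"
    proof (cases "j = i")
      case False
      then have "j \<notin> {j. j < m \<and> y!j \<noteq> y'!j}" using D by blast
      then show ?thesis using False j len by simp
    qed (use len j in simp)
  qed
  with i show ?thesis by blast
qed

lemma list_update_eq_list_update_iff:
  assumes "i < length y" "i' < length y" "v \<noteq> y!i" "v' \<noteq> y!i'"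
  shows "y[i:=v] = y[i':=v'] \<longleftrightarrow> i = i' \<and> v = v'"
proof
  assume eq: "y[i:=v] = y[i':=v']"
  have "i = i'"
  proof (rule ccontr)
    assume "i \<noteq> i'"
    then have "y[i':=v']!i = y!i" by simp
    with eq assms(1,3) show False by (metis nth_list_update_eq)
  qed
  with eq assms(1) show "i = i' \<and> v = v'" by (metis nth_list_update_eq)
qed simp

lemma neighbours_eq_image:
  assumes y: "y \<in> hverts m q"
  shows "{y'\<in>hverts m q. hadj y y' \<and> Q y'} =
    (\<lambda>(i,v). y[i:=v]) ` (SIGMA i:{..<m}. {v\<in>{..<q}-{y!i}. Q (y[i:=v])})"
proof
  show "{y'\<in>hverts m q. hadj y y' \<and> Q y'} \<subseteq> (\<lambda>(i,v). y[i:=v]) ` (SIGMA i:{..<m}. {v\<in>{..<q}-{y!i}. Q (y[i:=v])})"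
  proof clarify
    fix y' assume y': "y' \<in> hverts m q" "hadj y y'" "Q y'"
    then obtain i where i: "i < m" "y'!i \<noteq> y!i" "y' = y[i:=y'!i]"
      using hadj_imp_list_update[OF y] by blast
    then have "(i, y'!i) \<in> (SIGMA i:{..<m}. {v\<in>{..<q}-{y!i}. Q (y[i:=v])})" using y' by (auto simp: hverts_iff)
    then show "y' \<in> (\<lambda>(i,v). y[i:=v]) ` (SIGMA i:{..<m}. {v\<in>{..<q}-{y!i}. Q (y[i:=v])})"
      using i(3) by force
  qed
  show "(\<lambda>(i,v). y[i:=v]) ` (SIGMA i:{..<m}. {v\<in>{..<q}-{y!i}. Q (y[i:=v])}) \<subseteq> {y'\<in>hverts m q. hadj y y' \<and> Q y'}"
  proof
    fix y' assume "y' \<in> (\<lambda>(i,v). y[i:=v]) ` (SIGMA i:{..<m}. {v\<in>{..<q}-{y!i}. Q (y[i:=v])})"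
    then obtain i v where "i < m" "v < q" "v \<noteq> y!i" "Q (y[i:=v])" and y': "y' = y[i:=v]" by auto
    then show "y' \<in> {y'\<in>hverts m q. hadj y y' \<and> Q y'}"
      using list_update_in_hverts[OF y] hadj_list_update[OF y] by simp
  qed
qed

lemma card_neighbours:
  assumes y: "y \<in> hverts m q"
  shows "card {y'\<in>hverts m q. hadj y y' \<and> Q y'} = (\<Sum>i<m. card {v\<in>{..<q}-{y!i}. Q (y[i:=v])})"
proof -
  let ?S = "SIGMA i:{..<m}. {v\<in>{..<q}-{y!i}. Q (y[i:=v])}"
  have len: "length y = m" using y by (simp add: hverts_iff)
  have inj: "inj_on (\<lambda>(i,v). y[i:=v]) ?S"
  proof (rule inj_onI)
    fix p p' assume "p \<in> ?S" "p' \<in> ?S" "(\<lambda>(i,v). y[i:=v]) p = (\<lambda>(i,v). y[i:=v]) p'"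
    moreover obtain i v i' v' where "p = (i, v)" "p' = (i', v')" by fastforce
    ultimately show "p = p'" using len list_update_eq_list_update_iff[of i y i' v v'] by simp
  qed
  have "card {y'\<in>hverts m q. hadj y y' \<and> Q y'} = card ?S"
    using card_image[OF inj] neighbours_eq_image[OF y] by simp
  also have "\<dots> = (\<Sum>i<m. card {v\<in>{..<q}-{y!i}. Q (y[i:=v])})" by (simp add: card_SigmaI)
  finally show ?thesis .
qed

lemma int_card_neighbours:
  assumes "y \<in> hverts m q"
  shows "int (card {y'\<in>hverts m q. hadj y y' \<and> Q y'}) = (\<Sum>i<m. \<Sum>v\<in>{..<q}-{y!i}. of_bool (Q (y[i:=v])))"
  by (simp add: card_neighbours[OF assms] sum_of_bool_eq Int_def)

lemma two_le_q_if_perfect_coloring: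
  assumes "perfect_coloring n q r f S" "2 \<le> r"
  shows "2 \<le> q"
proof (rule ccontr)
  assume "\<not> 2 \<le> q"
  then have "x = replicate n 0" if "x \<in> hverts n q" for x
    using that by (auto simp: hverts_iff intro!: nth_equalityI)
  then have "f ` hverts n q \<subseteq> {f (replicate n 0)}" by blast
  then have "card (f ` hverts n q) \<le> card {f (replicate n 0)}"
    by (intro card_mono) auto
  moreover have "f ` hverts n q = {1..r}" using assms(1) by (simp add: perfect_coloring_def)
  ultimately show False using assms(2) by simp
qed

lemma partitionable_into_facesE:
  assumes "partitionable_into_faces n q k A"
  obtains P free where "\<And>F G. F \<in> P \<Longrightarrow> G \<in> P \<Longrightarrow> F \<noteq> G \<Longrightarrow> F \<inter> G = {}" "\<Union>P = A"
    "\<And>F. F \<in> P \<Longrightarrow> free F \<subseteq> {..<n}" "\<And>F. F \<in> P \<Longrightarrow> card (free F) = k"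
    "\<And>F. F \<in> P \<Longrightarrow> \<exists>v\<in>hverts n q. F = {y \<in> hverts n q. \<forall>i<n. i \<notin> free F \<longrightarrow> y!i = v!i}"
proof -
  obtain P where P: "(\<forall>F\<in>P. is_face n q k F) \<and> (\<forall>F\<in>P. \<forall>G\<in>P. F \<noteq> G \<longrightarrow> F \<inter> G = {}) \<and> \<Union>P = A"
    using assms unfolding partitionable_into_faces_def by (elim exE)
  then have "\<forall>F\<in>P. \<exists>K. K \<subseteq> {..<n} \<and> card K = k \<and>
      (\<exists>v\<in>hverts n q. F = {y \<in> hverts n q. \<forall>i<n. i \<notin> K \<longrightarrow> y!i = v!i})"
    by (simp add: is_face_def atLeast0LessThan Bex_def)
  then have "\<exists>free. \<forall>F\<in>P. free F \<subseteq> {..<n} \<and> card (free F) = k \<and>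
      (\<exists>v\<in>hverts n q. F = {y \<in> hverts n q. \<forall>i<n. i \<notin> free F \<longrightarrow> y!i = v!i})"
    by (rule bchoice)
  then obtain free where "\<forall>F\<in>P. free F \<subseteq> {..<n} \<and> card (free F) = k \<and>
      (\<exists>v\<in>hverts n q. F = {y \<in> hverts n q. \<forall>i<n. i \<notin> free F \<longrightarrow> y!i = v!i})"
    by (elim exE)
  with P show ?thesis by (intro that[of P free]) simp_all
qed

section \<open>Perfect codes in \<open>H(q+1, q)\<close>\<close>

lemma perfect_code_cover:
  assumes "perfect_code m q C" "x \<in> hverts m q"
  obtains c where "c \<in> C" "hdist x c \<le> 1"
proof -
  have "card {c\<in>C. hdist x c \<le> 1} = 1" using assms unfolding perfect_code_def by blast
  then obtain c where "{c\<in>C. hdist x c \<le> 1} = {c}" by (rule card_1_singletonE)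
  then show ?thesis using that by blast
qed

lemma perfect_code_cover_unique:
  assumes "perfect_code m q C" "x \<in> hverts m q" "c \<in> C" "c' \<in> C" "hdist x c \<le> 1" "hdist x c' \<le> 1"
  shows "c = c'"
proof -
  have "card {c\<in>C. hdist x c \<le> 1} = 1" using assms(1,2) unfolding perfect_code_def by blast
  then obtain c0 where E: "{c\<in>C. hdist x c \<le> 1} = {c0}" by (rule card_1_singletonE)
  have "c \<in> {c\<in>C. hdist x c \<le> 1}" "c' \<in> {c\<in>C. hdist x c \<le> 1}" using assms(3-6) by simp_all
  then show ?thesis unfolding E by simp
qed

lemma perfect_code_agree_off_two_eq:
  assumes pc: "perfect_code m q C" and c: "c \<in> C" "c' \<in> C"
    and agree: "\<forall>i<m. i \<noteq> p \<longrightarrow> i \<noteq> r \<longrightarrow> c!i = c'!i"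
  shows "c = c'"
proof -
  have hv: "c \<in> hverts m q" "c' \<in> hverts m q" using pc c unfolding perfect_code_def by auto
  then have len: "length c = m" "length c' = m" by (auto simp: hverts_iff)
  let ?x = "c[p := c'!p]"
  have x: "?x \<in> hverts m q"
  proof (cases "p < m")
    case True
    with hv have "c'!p < q" by (simp add: hverts_iff)
    with hv(1) show ?thesis by (rule list_update_in_hverts)
  qed (use hv(1) len in \<open>simp add: list_update_beyond\<close>)
  have "hdist ?x c \<le> 1" unfolding hdist_le_1_iff by (rule exI[of _ p]) simp
  moreover have "hdist ?x c' \<le> 1" unfolding hdist_le_1_iff
  proof (intro exI[of _ r] allI impI)
    fix i assume "i < length ?x" "i \<noteq> r"
    then show "?x ! i = c' ! i" using agree len by (cases "i = p") auto
  qed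
  ultimately show ?thesis using perfect_code_cover_unique[OF pc x c] by blast
qed

lemma perfect_code_cover_off_third:
  assumes pc: "perfect_code m q C" and none: "\<not> (\<exists>c\<in>C. \<forall>i<m. i \<noteq> p \<longrightarrow> i \<noteq> r \<longrightarrow> c!i = z!i)"
    and w: "w \<in> hverts m q" and agree: "\<forall>i<m. i \<noteq> p \<longrightarrow> i \<noteq> r \<longrightarrow> w!i = z!i"
  shows "\<exists>s. \<exists>c\<in>C. s < m \<and> s \<noteq> p \<and> s \<noteq> r \<and> (\<forall>i<m. i \<noteq> s \<longrightarrow> w!i = c!i)"
proof -
  obtain c where c: "c \<in> C" "hdist w c \<le> 1" using perfect_code_cover[OF pc w] by blast
  then obtain s where s: "\<forall>i<m. i \<noteq> s \<longrightarrow> w!i = c!i"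
    unfolding hdist_le_1_iff using w by (auto simp: hverts_iff)
  have "s < m \<and> s \<noteq> p \<and> s \<noteq> r"
  proof (rule ccontr)
    assume s_out: "\<not> (s < m \<and> s \<noteq> p \<and> s \<noteq> r)"
    have "\<forall>i<m. i \<noteq> p \<longrightarrow> i \<noteq> r \<longrightarrow> c!i = z!i"
    proof (intro allI impI)
      fix i assume i: "i < m" "i \<noteq> p" "i \<noteq> r"
      with s_out have "i \<noteq> s" by blast
      with s agree i show "c!i = z!i" by metis
    qed
    with c none show False by blast
  qed
  with c s show ?thesis by blast
qed

text \<open>Pigeonhole: otherwise each of the \<open>q\<^sup>2\<close> words agreeing with \<open>z\<close> off \<open>{p, r}\<close> is covered by a
  codeword differing from it at a single third position \<open>s\<close>, and \<open>s\<close> together with the letter at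
  \<open>p\<close> determines that codeword and hence the word; but there are only \<open>(m - 2) q < q\<^sup>2\<close> such pairs.\<close>
lemma perfect_code_agree_off_two_ex:
  assumes pc: "perfect_code m q C" and m: "m \<le> q + 1"
    and pr: "p < m" "r < m" "p \<noteq> r" and z: "z \<in> hverts m q"
  shows "\<exists>c\<in>C. \<forall>i<m. i \<noteq> p \<longrightarrow> i \<noteq> r \<longrightarrow> c!i = z!i"
proof (rule ccontr)
  assume none: "\<not> ?thesis"
  let ?T = "{..<q} \<times> {..<q}"
  define w where "w t = z[p := fst t, r := snd t]" for t
  have lz: "length z = m" using z by (simp add: hverts_iff)
  have w_off: "w t ! i = z!i" if "i \<noteq> p" "i \<noteq> r" for t i using that by (simp add: w_def)
  have w_p: "w t ! p = fst t" and w_r: "w t ! r = snd t" for t using pr lz by (simp_all add: w_def)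
  have "\<forall>t\<in>?T. \<exists>s. \<exists>c\<in>C. s < m \<and> s \<noteq> p \<and> s \<noteq> r \<and> (\<forall>i<m. i \<noteq> s \<longrightarrow> w t ! i = c!i)"
  proof
    fix t assume "t \<in> ?T"
    then have "w t \<in> hverts m q" using z by (auto simp: w_def intro!: list_update_in_hverts)
    then show "\<exists>s. \<exists>c\<in>C. s < m \<and> s \<noteq> p \<and> s \<noteq> r \<and> (\<forall>i<m. i \<noteq> s \<longrightarrow> w t ! i = c!i)"
      using perfect_code_cover_off_third[OF pc none] w_off by blast
  qed
  then obtain S where "\<forall>t\<in>?T. \<exists>c\<in>C. S t < m \<and> S t \<noteq> p \<and> S t \<noteq> r \<and>
      (\<forall>i<m. i \<noteq> S t \<longrightarrow> w t ! i = c!i)" by (rule bchoice[elim_format]) blast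
  then obtain c where Sc: "\<forall>t\<in>?T. c t \<in> C \<and> S t < m \<and> S t \<noteq> p \<and> S t \<noteq> r \<and>
      (\<forall>i<m. i \<noteq> S t \<longrightarrow> w t ! i = c t ! i)" unfolding Bex_def by (rule bchoice[elim_format]) blast
  have "inj_on (\<lambda>t. (S t, fst t)) ?T"
  proof (rule inj_onI)
    fix t t' assume t: "t \<in> ?T" "t' \<in> ?T" and eq: "(S t, fst t) = (S t', fst t')"
    have Sc_t: "c t \<in> C" "r \<noteq> S t" "\<forall>i<m. i \<noteq> S t \<longrightarrow> w t ! i = c t ! i"
      and Sc_t': "c t' \<in> C" "r \<noteq> S t'" "\<forall>i<m. i \<noteq> S t' \<longrightarrow> w t' ! i = c t' ! i"
      using Sc t by auto
    have "c t = c t'"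
    proof (rule perfect_code_agree_off_two_eq[OF pc Sc_t(1) Sc_t'(1), of "S t" r], intro allI impI)
      fix i assume i: "i < m" "i \<noteq> S t" "i \<noteq> r"
      then have "w t ! i = w t' ! i" using eq by (cases "i = p") (simp_all add: w_p w_off)
      then show "c t ! i = c t' ! i" using Sc_t(3) Sc_t'(3) i eq by simp
    qed
    then have "snd t = snd t'" using Sc_t(2,3) Sc_t'(2,3) pr by (simp add: w_r[symmetric])
    with eq show "t = t'" by (simp add: prod_eq_iff)
  qed
  moreover have "(\<lambda>t. (S t, fst t)) ` ?T \<subseteq> ({..<m} - {p, r}) \<times> {..<q}" using Sc by auto
  ultimately have "card ?T \<le> card (({..<m} - {p, r}) \<times> {..<q})" by (intro card_inj_on_le) auto
  then have "q * q \<le> (m - 2) * q" using pr by (simp add: card_cartesian_product card_Diff_subset numeral_2_eq_2)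
  moreover have "0 < q" using z pr by (auto simp: hverts_iff)
  ultimately show False using m by simp
qed

section \<open>Labellings of \<open>H(q, q)\<close>\<close>

locale block_labelling =
  fixes q :: nat and h \<sigma> :: "nat list \<Rightarrow> nat"
  assumes two_le_q: "2 \<le> q"
    and label_less: "w \<in> hverts q q \<Longrightarrow> h w < q"
    and shift_less: "w \<in> hverts q q \<Longrightarrow> \<sigma> w < q"
    and label_proper: "w \<in> hverts q q \<Longrightarrow> j < q \<Longrightarrow> v < q \<Longrightarrow> v \<noteq> w!j \<Longrightarrow> h (w[j:=v]) \<noteq> h w"
    and shift_separates: "w \<in> hverts q q \<Longrightarrow> j < q \<Longrightarrow> j' < q \<Longrightarrow> j \<noteq> j' \<Longrightarrow> v < q \<Longrightarrow> v' < q \<Longrightarrow>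
      v \<noteq> w!j \<Longrightarrow> v' \<noteq> w!j' \<Longrightarrow> h (w[j:=v]) = h (w[j':=v']) \<Longrightarrow> \<sigma> (w[j:=v]) \<noteq> \<sigma> (w[j':=v'])"
begin

definition level_neighbours :: "nat list \<Rightarrow> nat \<Rightarrow> (nat \<times> nat) set" where
  "level_neighbours w x = (SIGMA j:{..<q}. {v\<in>{..<q}-{w!j}. h (w[j:=v]) = x})"

lemma bij_betw_label_line:
  assumes w: "w \<in> hverts q q" and j: "j < q"
  shows "bij_betw (\<lambda>v. h (w[j:=v])) {..<q} {..<q}"
proof (rule bij_betw_if_inj_on_card_eq)
  have len: "length w = q" using w by (simp add: hverts_iff)
  show "inj_on (\<lambda>v. h (w[j:=v])) {..<q}"
  proof (rule inj_onI, rule ccontr)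
    fix v v' assume v: "v \<in> {..<q}" "v' \<in> {..<q}" and eq: "h (w[j:=v]) = h (w[j:=v'])" and "v \<noteq> v'"
    then have "h ((w[j:=v])[j:=v']) \<noteq> h (w[j:=v])"
      using w j len by (intro label_proper list_update_in_hverts) auto
    with eq show False by simp
  qed
  show "(\<lambda>v. h (w[j:=v])) ` {..<q} \<subseteq> {..<q}"
    using w by (auto intro: label_less list_update_in_hverts)
qed simp_all

lemma card_level_neighbours:
  assumes w: "w \<in> hverts q q" and x: "x < q" "x \<noteq> h w"
  shows "card (level_neighbours w x) = q"
proof -
  have "card {v\<in>{..<q}-{w!j}. h (w[j:=v]) = x} = 1" if j: "j < q" for j
  proof -
    have "{v\<in>{..<q}-{w!j}. h (w[j:=v]) = x} = {v\<in>{..<q}. h (w[j:=v]) = x}" using x(2) by auto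
    also have "card \<dots> = card {u\<in>{..<q}. u = x}"
      by (rule card_filter_bij_betw[OF bij_betw_label_line[OF w j]])
    also have "{u\<in>{..<q}. u = x} = {x}" using x(1) by auto
    finally show ?thesis by simp
  qed
  then show ?thesis unfolding level_neighbours_def by (simp add: card_SigmaI)
qed

lemma bij_betw_shift_level_neighbours:
  assumes w: "w \<in> hverts q q" and x: "x < q" "x \<noteq> h w"
  shows "bij_betw (\<lambda>(j,v). \<sigma> (w[j:=v])) (level_neighbours w x) {..<q}"
proof (rule bij_betw_if_inj_on_card_eq)
  show "inj_on (\<lambda>(j,v). \<sigma> (w[j:=v])) (level_neighbours w x)"
  proof (rule inj_onI)
    fix z z' assume z: "z \<in> level_neighbours w x" "z' \<in> level_neighbours w x"
      and eq: "(\<lambda>(j,v). \<sigma> (w[j:=v])) z = (\<lambda>(j,v). \<sigma> (w[j:=v])) z'"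
    obtain j v j' v' where jv: "z = (j, v)" "z' = (j', v')" by fastforce
    with z have nb: "j < q" "j' < q" "v < q" "v' < q" "v \<noteq> w!j" "v' \<noteq> w!j'"
      "h (w[j:=v]) = x" "h (w[j':=v']) = x"
      by (auto simp: level_neighbours_def)
    show "z = z'"
    proof (cases "j = j'")
      case True
      with nb have "v = v'" using bij_betw_label_line[OF w nb(1)] by (simp add: bij_betw_def inj_on_def)
      with True jv show ?thesis by simp
    next
      case False
      with nb eq jv show ?thesis using shift_separates[OF w] by simp
    qed
  qed
  show "(\<lambda>(j,v). \<sigma> (w[j:=v])) ` level_neighbours w x \<subseteq> {..<q}"
    using w by (auto simp: level_neighbours_def intro: shift_less list_update_in_hverts)
qed (simp_all add: card_level_neighbours w x)

lemma label_shift_surj: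
  assumes x: "x < q" and s: "s < q"
  obtains w where "w \<in> hverts q q" "h w = x" "\<sigma> w = s"
proof -
  let ?w0 = "replicate q 0"
  have w0: "?w0 \<in> hverts q q" using two_le_q by (simp add: hverts_iff)
  have w1: "?w0[0:=1] \<in> hverts q q" using two_le_q w0 by (simp add: list_update_in_hverts)
  have "h (?w0[0:=1]) \<noteq> h ?w0" using two_le_q by (intro label_proper[OF w0]) auto
  then obtain w where w: "w \<in> hverts q q" "h w \<noteq> x" using w0 w1 by metis
  then have "s \<in> (\<lambda>(j,v). \<sigma> (w[j:=v])) ` level_neighbours w x"
    using bij_betw_shift_level_neighbours[OF w(1) x] s by (simp add: bij_betw_def)
  then obtain j v where "j < q" "v < q" "h (w[j:=v]) = x" "\<sigma> (w[j:=v]) = s"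
    by (auto simp: level_neighbours_def)
  then show ?thesis using that w(1) list_update_in_hverts by blast
qed

end

locale code_labelling =
  fixes q :: nat and C :: "nat list set"
  assumes perfect: "perfect_code (q + 1) q C" and two_le_q: "2 \<le> q"
begin

definition codeword :: "nat list \<Rightarrow> nat list" where
  "codeword w = (THE c. c \<in> C \<and> (\<forall>i<q-1. c!i = w!i))"

definition label :: "nat list \<Rightarrow> nat" where
  "label w = (w!(q-1) + q - codeword w ! (q-1)) mod q"

definition shift :: "nat list \<Rightarrow> nat" where
  "shift w = codeword w ! q"

lemma code_in_hverts: "c \<in> C \<Longrightarrow> c \<in> hverts (q+1) q"
  using perfect unfolding perfect_code_def by blast

lemma code_eq_if_prefix_eq: "c \<in> C \<Longrightarrow> c' \<in> C \<Longrightarrow> \<forall>i<q-1. c!i = c'!i \<Longrightarrow> c = c'"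
  by (rule perfect_code_agree_off_two_eq[OF perfect, where p = "q-1" and r = q]) auto

lemma codeword_spec:
  assumes w: "w \<in> hverts q q"
  shows "codeword w \<in> C" "\<forall>i<q-1. codeword w ! i = w!i"
proof -
  let ?z = "take (q-1) w @ [0, 0]"
  have "?z \<in> hverts (q+1) q"
    using w two_le_q by (auto simp: hverts_iff nth_append nth_Cons split: nat.split)
  moreover have "q - 1 < q + 1" "q < q + 1" "q - 1 \<noteq> q" using two_le_q by auto
  ultimately obtain c where c: "c \<in> C" "\<forall>i<q+1. i \<noteq> q-1 \<longrightarrow> i \<noteq> q \<longrightarrow> c!i = ?z!i"
    using perfect_code_agree_off_two_ex[OF perfect le_refl] by blast
  then have c_prefix: "\<forall>i<q-1. c!i = w!i" using w by (auto simp: nth_append hverts_iff)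
  have "codeword w = c" unfolding codeword_def
    by (rule the_equality) (use c(1) c_prefix code_eq_if_prefix_eq in auto)
  with c(1) c_prefix show "codeword w \<in> C" "\<forall>i<q-1. codeword w ! i = w!i" by simp_all
qed

lemma codeword_less: "w \<in> hverts q q \<Longrightarrow> i < q + 1 \<Longrightarrow> codeword w ! i < q"
  using code_in_hverts[OF codeword_spec(1)] by (simp add: hverts_iff)

text \<open>With \<open>r = q\<close>, a position beyond the words, the codewords may differ in their last letter,
  so the shifts need not agree.\<close>
lemma codeword_eq_if_label_shift_eq:
  assumes w: "w \<in> hverts q q" "w' \<in> hverts q q"
    and agree: "\<forall>i<q. i \<noteq> p \<longrightarrow> i \<noteq> r \<longrightarrow> w!i = w'!i"
    and label: "label w = label w'" and shift: "r = q \<or> shift w = shift w'"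
  shows "codeword w = codeword w'"
proof (rule perfect_code_agree_off_two_eq[OF perfect codeword_spec(1)[OF w(1)] codeword_spec(1)[OF w(2)], of p r],
    intro allI impI)
  fix i assume i: "i < q+1" "i \<noteq> p" "i \<noteq> r"
  consider "i < q-1" | "i = q-1" | "i = q" using i by linarith
  then show "codeword w ! i = codeword w' ! i"
  proof cases
    case 1
    then show ?thesis using codeword_spec(2)[OF w(1)] codeword_spec(2)[OF w(2)] agree[rule_format, of i] i by simp
  next
    case 2
    then have "w!(q-1) = w'!(q-1)" using agree[rule_format, of "q-1"] i two_le_q by simp
    with label have "(w!(q-1) + q - codeword w ! (q-1)) mod q = (w!(q-1) + q - codeword w' ! (q-1)) mod q"
      by (simp add: label_def)
    moreover have "codeword w ! (q-1) < q" "codeword w' ! (q-1) < q" using codeword_less w by simp_all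
    ultimately show ?thesis using 2 add_diff_mod_inj_right by blast
  next
    case 3
    then show ?thesis using shift i by (simp add: shift_def)
  qed
qed

lemma eq_if_codeword_label_eq:
  assumes w: "w \<in> hverts q q" "w' \<in> hverts q q"
    and code: "codeword w = codeword w'" and label: "label w = label w'"
  shows "w = w'"
proof (rule nth_equalityI)
  show "length w = length w'" using w by (simp add: hverts_iff)
  fix i assume "i < length w"
  then have "i < q" using w by (simp add: hverts_iff)
  then consider "i < q-1" | "i = q-1" by linarith
  then show "w!i = w'!i"
  proof cases
    case 1
    then show ?thesis using codeword_spec(2)[OF w(1)] codeword_spec(2)[OF w(2)] code by simp
  next
    case 2
    from label code have "(w!(q-1) + q - codeword w ! (q-1)) mod q = (w'!(q-1) + q - codeword w ! (q-1)) mod q"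
      by (simp add: label_def)
    moreover have "w!(q-1) < q" "w'!(q-1) < q" using w two_le_q by (simp_all add: hverts_iff)
    moreover have "codeword w ! (q-1) \<le> q" by (intro less_imp_le codeword_less[OF w(1)]) simp
    ultimately show ?thesis using 2 add_diff_mod_inj_left by blast
  qed
qed

lemma eq_if_label_shift_eq:
  assumes "w \<in> hverts q q" "w' \<in> hverts q q" "\<forall>i<q. i \<noteq> p \<longrightarrow> i \<noteq> r \<longrightarrow> w!i = w'!i"
    and "label w = label w'" "r = q \<or> shift w = shift w'"
  shows "w = w'"
  using assms codeword_eq_if_label_shift_eq eq_if_codeword_label_eq by blast

sublocale block_labelling q label shift
proof
  show "2 \<le> q" by (rule two_le_q)
  show "label w < q" for w using two_le_q by (simp add: label_def)
  show "shift w < q" if "w \<in> hverts q q" for w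
    using codeword_less[OF that] by (simp add: shift_def)
  show "label (w[j:=v]) \<noteq> label w"
    if w: "w \<in> hverts q q" and j: "j < q" and v: "v < q" "v \<noteq> w!j" for w j v
  proof
    assume "label (w[j:=v]) = label w"
    then have "w[j:=v] = w"
      using w j v by (intro eq_if_label_shift_eq[where p = j and r = q]) (simp_all add: list_update_in_hverts)
    with j v(2) w show False by (metis hverts_iff nth_list_update_eq)
  qed
  show "shift (w[j:=v]) \<noteq> shift (w[j':=v'])"
    if w: "w \<in> hverts q q" and j: "j < q" "j' < q" "j \<noteq> j'" and v: "v < q" "v' < q"
      and changed: "v \<noteq> w!j" "v' \<noteq> w!j'" and label: "label (w[j:=v]) = label (w[j':=v'])"
    for w j j' v v'
  proof
    assume "shift (w[j:=v]) = shift (w[j':=v'])"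
    then have "w[j:=v] = w[j':=v']"
      using w j v label by (intro eq_if_label_shift_eq[where p = j and r = j']) (simp_all add: list_update_in_hverts)
    with j changed w show False by (simp add: list_update_eq_list_update_iff hverts_iff)
  qed
qed

end

section \<open>Lifting a perfect colouring\<close>

locale lifted_colouring = block_labelling q h \<sigma>
  for q :: nat and h \<sigma> :: "nat list \<Rightarrow> nat" +
  fixes n k :: nat and f :: "nat list \<Rightarrow> nat" and P :: "nat list set set"
    and free :: "nat list set \<Rightarrow> nat set" and a b c d :: int
  assumes perfect_f: "perfect_coloring n q 2 f
      (\<lambda>i j. if i = 1 then (if j = 1 then a else b) else (if j = 1 then c else d))"
    and faces_disjoint: "F \<in> P \<Longrightarrow> G \<in> P \<Longrightarrow> F \<noteq> G \<Longrightarrow> F \<inter> G = {}"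
    and faces_cover: "\<Union>P = {y \<in> hverts n q. f y = 1}"
    and free_subset: "F \<in> P \<Longrightarrow> free F \<subseteq> {..<n}"
    and card_free: "F \<in> P \<Longrightarrow> card (free F) = k"
    and face_eq: "F \<in> P \<Longrightarrow> \<exists>v\<in>hverts n q. F = {y \<in> hverts n q. \<forall>i<n. i \<notin> free F \<longrightarrow> y!i = v!i}"
begin

definition block :: "nat list \<Rightarrow> nat \<Rightarrow> nat list" where
  "block x l = map (\<lambda>j. x!(l*q+j)) [0..<q]"

definition collapse :: "nat list \<Rightarrow> nat list" where
  "collapse x = map (\<lambda>l. h (block x l)) [0..<n]"

lemma length_block [simp]: "length (block x l) = q"
  by (simp add: block_def)

lemma nth_block [simp]: "j < q \<Longrightarrow> block x l ! j = x!(l*q+j)"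
  by (simp add: block_def)

lemma length_collapse [simp]: "length (collapse x) = n"
  by (simp add: collapse_def)

lemma nth_collapse [simp]: "l < n \<Longrightarrow> collapse x ! l = h (block x l)"
  by (simp add: collapse_def)

lemma block_in_hverts: "x \<in> hverts (q*n) q \<Longrightarrow> l < n \<Longrightarrow> block x l \<in> hverts q q"
  using block_index_less by (auto simp: hverts_iff)

lemma collapse_in_hverts: "x \<in> hverts (q*n) q \<Longrightarrow> collapse x \<in> hverts n q"
  using block_in_hverts label_less by (auto simp: hverts_iff)

lemma block_list_update:
  assumes x: "x \<in> hverts (q*n) q" and l: "l < n" and j: "j < q"
  shows "block (x[l*q+j:=v]) l' = (if l' = l then (block x l)[j:=v] else block x l')"
proof (rule nth_equalityI)
  fix j' assume "j' < length (block (x[l*q+j:=v]) l')"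
  then have j': "j' < q" by simp
  have "l*q+j < length x" using x block_index_less[OF l j] by (simp add: hverts_iff)
  then show "block (x[l*q+j:=v]) l' ! j' = (if l' = l then (block x l)[j:=v] else block x l') ! j'"
    using j j' block_index_eq_iff[OF j j'] by (auto simp: nth_list_update)
qed simp

lemma collapse_list_update:
  assumes x: "x \<in> hverts (q*n) q" and l: "l < n" and j: "j < q"
  shows "collapse (x[l*q+j:=v]) = (collapse x)[l := h ((block x l)[j:=v])]"
  by (rule nth_equalityI) (use block_list_update[OF x l j] in \<open>auto simp: nth_list_update\<close>)

lemma card_lifted_neighbours:
  assumes x: "x \<in> hverts (q*n) q"
  shows "card {x'\<in>hverts (q*n) q. hadj x x' \<and> Q x'} =
    (\<Sum>l<n. \<Sum>u\<in>{..<q}-{collapse x!l}. card {z\<in>level_neighbours (block x l) u. Q (x[l*q + fst z := snd z])})"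
proof -
  have "card {x'\<in>hverts (q*n) q. hadj x x' \<and> Q x'} =
      (\<Sum>l<n. \<Sum>j<q. card {v\<in>{..<q}-{x!(l*q+j)}. Q (x[l*q+j:=v])})"
    by (simp add: card_neighbours[OF x] sum_blocks)
  also have "\<dots> = (\<Sum>l<n. \<Sum>u\<in>{..<q}-{collapse x!l}. card {z\<in>level_neighbours (block x l) u. Q (x[l*q + fst z := snd z])})"
  proof (rule sum.cong[OF refl])
    fix l assume "l \<in> {..<n}"
    then have l: "l < n" by simp
    let ?w = "block x l"
    let ?T = "SIGMA j:{..<q}. {v\<in>{..<q}-{?w!j}. Q (x[l*q+j:=v])}"
    have w: "?w \<in> hverts q q" by (rule block_in_hverts[OF x l])
    have "(\<Sum>j<q. card {v\<in>{..<q}-{x!(l*q+j)}. Q (x[l*q+j:=v])}) = card ?T"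
      by simp
    also have "\<dots> = (\<Sum>u\<in>{..<q}-{h ?w}. card {z\<in>?T. h (?w[fst z := snd z]) = u})"
    proof (rule card_eq_sum_card_fibres)
      show "(\<lambda>z. h (?w[fst z := snd z])) ` ?T \<subseteq> {..<q} - {h ?w}"
        using w label_less label_proper list_update_in_hverts by fastforce
    qed (simp_all add: finite_SigmaI)
    also have "\<dots> = (\<Sum>u\<in>{..<q}-{collapse x!l}. card {z\<in>level_neighbours ?w u. Q (x[l*q + fst z := snd z])})"
      using l by (intro sum.cong arg_cong[where f = card]) (auto simp: level_neighbours_def)
    finally show "(\<Sum>j<q. card {v\<in>{..<q}-{x!(l*q+j)}. Q (x[l*q+j:=v])}) = \<dots>" .
  qed
  finally show ?thesis .
qed

lemma f_image: "f ` hverts n q = {1..2}"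
  using perfect_f unfolding perfect_coloring_def by (rule conjunct1)

lemma card_neighbours_colour:
  assumes "y \<in> hverts n q" "j \<in> {1..2}"
  shows "int (card {y'\<in>hverts n q. hadj y y' \<and> f y' = j}) =
    (if f y = 1 then (if j = 1 then a else b) else (if j = 1 then c else d))"
  using perfect_f assms unfolding perfect_coloring_def by blast

lemma colour_cases: "y \<in> hverts n q \<Longrightarrow> f y = 1 \<or> f y = 2"
proof -
  assume "y \<in> hverts n q"
  then have "f y \<in> {1..2}" using f_image by blast
  then show ?thesis by auto
qed

lemma colour_surj:
  assumes "j \<in> {1..2}"
  obtains y where "y \<in> hverts n q" "f y = j"
  using assms f_image by (metis imageE)

definition face_of :: "nat list \<Rightarrow> nat list set" where
  "face_of y = (THE F. F \<in> P \<and> y \<in> F)"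

lemma face_of_eq: "F \<in> P \<Longrightarrow> y \<in> F \<Longrightarrow> face_of y = F"
  unfolding face_of_def using faces_disjoint by (intro the_equality) blast+

lemma face_of_in: "y \<in> hverts n q \<Longrightarrow> f y = 1 \<Longrightarrow> face_of y \<in> P \<and> y \<in> face_of y"
  using faces_cover face_of_eq by blast

lemma free_face_of: "y \<in> hverts n q \<Longrightarrow> f y = 1 \<Longrightarrow> free (face_of y) \<subseteq> {..<n} \<and> card (free (face_of y)) = k"
  using face_of_in free_subset card_free by blast

lemma mem_faceD: "F \<in> P \<Longrightarrow> y \<in> F \<Longrightarrow> y \<in> hverts n q \<and> f y = 1"
  using faces_cover by blast

lemma mem_face_iff:
  assumes F: "F \<in> P" and y: "y \<in> F"
  shows "z \<in> F \<longleftrightarrow> z \<in> hverts n q \<and> (\<forall>i<n. i \<notin> free F \<longrightarrow> z!i = y!i)"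
proof -
  obtain v where v: "F = {y \<in> hverts n q. \<forall>i<n. i \<notin> free F \<longrightarrow> y!i = v!i}" using face_eq[OF F] by blast
  with y have "\<forall>i<n. i \<notin> free F \<longrightarrow> y!i = v!i" by blast
  then show ?thesis by (subst (1) v) auto
qed

lemma face_of_list_update:
  assumes y: "y \<in> hverts n q" "f y = 1" and l: "l \<in> free (face_of y)" and u: "u < q"
  shows "f (y[l:=u]) = 1" "face_of (y[l:=u]) = face_of y"
proof -
  have F: "face_of y \<in> P" "y \<in> face_of y" using face_of_in[OF y] by auto
  have "y[l:=u] \<in> face_of y" unfolding mem_face_iff[OF F]
  proof (intro conjI allI impI)
    show "y[l:=u] \<in> hverts n q" using y(1) u by (rule list_update_in_hverts)
    fix i assume "i < n" "i \<notin> free (face_of y)"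
    with l have "i \<noteq> l" by blast
    then show "y[l:=u]!i = y!i" by simp
  qed
  then show "f (y[l:=u]) = 1" "face_of (y[l:=u]) = face_of y"
    using mem_faceD[OF F(1)] face_of_eq[OF F(1)] by auto
qed

lemma in_free_face_of_list_update_iff:
  assumes y: "y \<in> hverts n q" and l: "l < n" and u: "u < q" and f: "f (y[l:=u]) = 1"
  shows "l \<in> free (face_of (y[l:=u])) \<longleftrightarrow> f y = 1 \<and> l \<in> free (face_of y)"
proof
  assume l': "l \<in> free (face_of (y[l:=u]))"
  have "y!l < q" using y l by (simp add: hverts_iff)
  moreover have "y[l:=u] \<in> hverts n q" using y u by (rule list_update_in_hverts)
  ultimately have "f ((y[l:=u])[l:=y!l]) = 1 \<and> face_of ((y[l:=u])[l:=y!l]) = face_of (y[l:=u])"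
    using face_of_list_update f l' by blast
  with l' show "f y = 1 \<and> l \<in> free (face_of y)" by simp
qed (use face_of_list_update[OF y _ _ u] in simp)

lemma exists_fixed_coordinate:
  assumes F: "F \<in> P"
  obtains l where "l < n" "l \<notin> free F"
proof -
  obtain y where "y \<in> hverts n q" "F = {z \<in> hverts n q. \<forall>i<n. i \<notin> free F \<longrightarrow> z!i = y!i}"
    using face_eq[OF F] by blast
  then have y: "y \<in> F" by blast
  obtain z where z: "z \<in> hverts n q" "f z = 2" by (rule colour_surj[of 2]) auto
  have "z \<notin> F" using mem_faceD[OF F] z by auto
  then show ?thesis using that z(1) by (auto simp: mem_face_iff[OF F y])
qed

definition weight :: "nat \<Rightarrow> nat set \<Rightarrow> nat \<Rightarrow> nat list \<Rightarrow> nat" where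
  "weight e K l w = (if l \<in> K then e * h w else \<sigma> w)"

definition rest_weight :: "nat \<Rightarrow> nat set \<Rightarrow> nat list \<Rightarrow> nat \<Rightarrow> nat" where
  "rest_weight e K x l = (\<Sum>l'\<in>{..<n}-{l}. weight e K l' (block x l'))"

text \<open>\<open>lift_colour 1\<close> is the colouring \<open>g'\<close> and \<open>lift_colour 0\<close> the colouring \<open>g''\<close> of the theorem.\<close>

definition lift_colour :: "nat \<Rightarrow> nat list \<Rightarrow> nat" where
  "lift_colour e x = (if f (collapse x) = 1
     then 1 + (\<Sum>l<n. weight e (free (face_of (collapse x))) l (block x l)) mod q
     else q + 1)"

lemma lift_colour_split:
  assumes "f (collapse x) = 1" "l < n"
  shows "lift_colour e x = 1 + (weight e (free (face_of (collapse x))) l (block x l)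
    + rest_weight e (free (face_of (collapse x))) x l) mod q"
  using assms by (simp add: lift_colour_def rest_weight_def sum.remove)

lemma lift_colour_on_faces: "f (collapse x) = 1 \<Longrightarrow> 1 \<le> lift_colour e x \<and> lift_colour e x \<le> q"
  using two_le_q by (simp add: lift_colour_def Suc_leI)

lemma lift_colour_off_faces: "f (collapse x) \<noteq> 1 \<Longrightarrow> lift_colour e x = q + 1"
  by (simp add: lift_colour_def)

lemma lift_colour_list_update:
  assumes x: "x \<in> hverts (q*n) q" and l: "l < n" and z: "z \<in> level_neighbours (block x l) u"
  shows "lift_colour e (x[l*q + fst z := snd z]) =
    (if f ((collapse x)[l:=u]) = 1
     then 1 + (weight e (free (face_of ((collapse x)[l:=u]))) l ((block x l)[fst z := snd z])
           + rest_weight e (free (face_of ((collapse x)[l:=u]))) x l) mod q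
     else q + 1)"
proof -
  obtain j v where jv: "z = (j, v)" by fastforce
  with z have j: "j < q" and u: "h ((block x l)[j:=v]) = u" by (auto simp: level_neighbours_def)
  let ?x' = "x[l*q+j:=v]"
  have collapse': "collapse ?x' = (collapse x)[l:=u]" using collapse_list_update[OF x l j] u by simp
  have "rest_weight e K ?x' l = rest_weight e K x l" for K
    unfolding rest_weight_def by (intro sum.cong) (simp_all add: block_list_update[OF x l j])
  then show ?thesis using lift_colour_split[of ?x' l e] collapse' l jv
    by (simp add: lift_colour_off_faces block_list_update[OF x l j])
qed

definition neighbour_count :: "nat \<Rightarrow> nat \<Rightarrow> nat list \<Rightarrow> nat \<Rightarrow> nat \<Rightarrow> nat" where
  "neighbour_count e t x l u =
     card {z\<in>level_neighbours (block x l) u. lift_colour e (x[l*q + fst z := snd z]) = t}"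

lemma int_card_lifted_neighbours_colour:
  assumes "x \<in> hverts (q*n) q"
  shows "int (card {x'\<in>hverts (q*n) q. hadj x x' \<and> lift_colour e x' = t}) =
    (\<Sum>l<n. \<Sum>u\<in>{..<q}-{collapse x!l}. int (neighbour_count e t x l u))"
  by (simp add: card_lifted_neighbours[OF assms] neighbour_count_def)

lemma neighbour_count_const:
  assumes x: "x \<in> hverts (q*n) q" and l: "l < n" and u: "u < q" "u \<noteq> collapse x ! l"
    and const: "\<And>z. z \<in> level_neighbours (block x l) u \<Longrightarrow> lift_colour e (x[l*q + fst z := snd z]) = g"
  shows "neighbour_count e t x l u = q * of_bool (t = g)"
proof -
  have "card (level_neighbours (block x l) u) = q"
    using card_level_neighbours[OF block_in_hverts[OF x l] u(1)] u(2) l by simp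
  moreover have "{z\<in>level_neighbours (block x l) u. lift_colour e (x[l*q + fst z := snd z]) = t} =
      (if t = g then level_neighbours (block x l) u else {})"
    using const by auto
  ultimately show ?thesis unfolding neighbour_count_def by simp
qed

lemma neighbour_count_all_colours:
  assumes x: "x \<in> hverts (q*n) q" and l: "l < n" and u: "u < q" "u \<noteq> collapse x ! l"
    and shifting: "\<And>z. z \<in> level_neighbours (block x l) u \<Longrightarrow>
      lift_colour e (x[l*q + fst z := snd z]) = 1 + (\<sigma> ((block x l)[fst z := snd z]) + R) mod q"
  shows "neighbour_count e t x l u = of_bool (1 \<le> t \<and> t \<le> q)"
proof -
  let ?N = "level_neighbours (block x l) u"
  let ?\<phi> = "\<lambda>z. (\<sigma> ((block x l)[fst z := snd z]) + R) mod q"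
  have "(\<lambda>(j,v). \<sigma> ((block x l)[j:=v])) = (\<lambda>z. \<sigma> ((block x l)[fst z := snd z]))" by auto
  then have "bij_betw (\<lambda>z. \<sigma> ((block x l)[fst z := snd z])) ?N {..<q}"
    using bij_betw_shift_level_neighbours[OF block_in_hverts[OF x l] u(1)] u(2) l by simp
  then have "bij_betw ?\<phi> ?N {..<q}"
    using bij_betw_trans[OF _ bij_betw_add_mod[of q R]] two_le_q by (simp add: comp_def)
  then have "card {z\<in>?N. 1 + ?\<phi> z = t} = card {s\<in>{..<q}. 1 + s = t}"
    by (rule card_filter_bij_betw)
  moreover have "{z\<in>?N. lift_colour e (x[l*q + fst z := snd z]) = t} = {z\<in>?N. 1 + ?\<phi> z = t}"
    using shifting by auto
  ultimately show ?thesis unfolding neighbour_count_def card_shifted_colours by simp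
qed

text \<open>A neighbour of \<open>x\<close> inside the block of a free coordinate of the face of \<open>collapse x\<close>
  stays in that face and its colour is fixed by the new label \<open>u\<close>; every other neighbour
  over colour 1 lies in a face in which coordinate \<open>l\<close> is fixed, so its colour runs through
  all of \<open>1..q\<close> with the shift.\<close>
lemma neighbour_count_eq:
  assumes x: "x \<in> hverts (q*n) q" and l: "l < n" and u: "u < q" "u \<noteq> collapse x ! l"
  shows "int (neighbour_count e t x l u) =
    (if f (collapse x) = 1 \<and> l \<in> free (face_of (collapse x))
     then int q * of_bool (t = 1 + (e * u + rest_weight e (free (face_of (collapse x))) x l) mod q)
     else if f ((collapse x)[l:=u]) = 1 then of_bool (1 \<le> t \<and> t \<le> q)
     else int q * of_bool (t = q + 1))"
proof -
  let ?y = "collapse x"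
  have y: "?y \<in> hverts n q" by (rule collapse_in_hverts[OF x])
  have nb: "fst z < q" "h ((block x l)[fst z := snd z]) = u" if "z \<in> level_neighbours (block x l) u" for z
    using that by (auto simp: level_neighbours_def)
  consider (in_face) "f ?y = 1" "l \<in> free (face_of ?y)"
    | (fixed) "\<not> (f ?y = 1 \<and> l \<in> free (face_of ?y))" "f (?y[l:=u]) = 1"
    | (other) "f (?y[l:=u]) \<noteq> 1" "\<not> (f ?y = 1 \<and> l \<in> free (face_of ?y))"
    by blast
  then show ?thesis
  proof cases
    case in_face
    then have "f (?y[l:=u]) = 1" "face_of (?y[l:=u]) = face_of ?y"
      using face_of_list_update[OF y in_face u(1)] by auto
    with in_face have "neighbour_count e t x l u =
        q * of_bool (t = 1 + (e * u + rest_weight e (free (face_of ?y)) x l) mod q)"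
      using lift_colour_list_update[OF x l] nb
      by (intro neighbour_count_const[OF x l u]) (simp add: weight_def)
    with in_face show ?thesis by (simp only: if_True simp_thms of_nat_mult of_nat_of_bool)
  next
    case fixed
    then have "l \<notin> free (face_of (?y[l:=u]))"
      using in_free_face_of_list_update_iff[OF y l u(1)] by blast
    then have "neighbour_count e t x l u = of_bool (1 \<le> t \<and> t \<le> q)"
      using fixed(2) lift_colour_list_update[OF x l]
      by (intro neighbour_count_all_colours[OF x l u]) (simp add: weight_def)
    with fixed show ?thesis by (simp only: if_not_P if_P if_False of_nat_of_bool)
  next
    case other
    then have "neighbour_count e t x l u = q * of_bool (t = q + 1)"
      using lift_colour_list_update[OF x l] by (intro neighbour_count_const[OF x l u]) simp
    with other show ?thesis by (simp only: if_not_P if_False of_nat_mult of_nat_of_bool)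
  qed
qed

lemma sum_neighbours_by_colour:
  assumes y: "y \<in> hverts n q"
  shows "(\<Sum>l<n. \<Sum>u\<in>{..<q}-{y!l}. if f (y[l:=u]) = 1 then A else B) =
    A * int (card {y'\<in>hverts n q. hadj y y' \<and> f y' = 1}) + B * int (card {y'\<in>hverts n q. hadj y y' \<and> f y' = 2})"
proof -
  have "(if f (y[l:=u]) = 1 then A else B) = A * of_bool (f (y[l:=u]) = 1) + B * of_bool (f (y[l:=u]) = 2)"
    if "u \<in> {..<q}-{y!l}" for l u
  proof -
    have "u < q" using that by simp
    then have "f (y[l:=u]) = 1 \<or> f (y[l:=u]) = 2" by (intro colour_cases list_update_in_hverts[OF y])
    then show ?thesis by auto
  qed
  then have "(\<Sum>l<n. \<Sum>u\<in>{..<q}-{y!l}. if f (y[l:=u]) = 1 then A else B) =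
      (\<Sum>l<n. \<Sum>u\<in>{..<q}-{y!l}. A * of_bool (f (y[l:=u]) = 1) + B * of_bool (f (y[l:=u]) = 2))"
    by (intro sum.cong) simp_all
  also have "\<dots> = A * (\<Sum>l<n. \<Sum>u\<in>{..<q}-{y!l}. of_bool (f (y[l:=u]) = 1))
      + B * (\<Sum>l<n. \<Sum>u\<in>{..<q}-{y!l}. of_bool (f (y[l:=u]) = 2))"
    by (simp only: sum.distrib sum_distrib_left)
  finally show ?thesis by (simp only: int_card_neighbours[OF y])
qed

lemma card_lifted_neighbours_off_faces:
  assumes x: "x \<in> hverts (q*n) q" and f: "f (collapse x) \<noteq> 1"
  shows "int (card {x'\<in>hverts (q*n) q. hadj x x' \<and> lift_colour e x' = t}) =
    of_bool (1 \<le> t \<and> t \<le> q) * c + int q * of_bool (t = q + 1) * d"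
proof -
  let ?y = "collapse x"
  have y: "?y \<in> hverts n q" by (rule collapse_in_hverts[OF x])
  have f2: "f ?y = 2" using colour_cases[OF y] f by simp
  have "int (card {x'\<in>hverts (q*n) q. hadj x x' \<and> lift_colour e x' = t}) =
      (\<Sum>l<n. \<Sum>u\<in>{..<q}-{?y!l}. if f (?y[l:=u]) = 1 then of_bool (1 \<le> t \<and> t \<le> q) else int q * of_bool (t = q + 1))"
    using f by (simp add: int_card_lifted_neighbours_colour[OF x] neighbour_count_eq[OF x])
  also have "\<dots> = of_bool (1 \<le> t \<and> t \<le> q) * int (card {y'\<in>hverts n q. hadj ?y y' \<and> f y' = 1})
      + int q * of_bool (t = q + 1) * int (card {y'\<in>hverts n q. hadj ?y y' \<and> f y' = 2})"
    by (rule sum_neighbours_by_colour[OF y])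
  also have "\<dots> = of_bool (1 \<le> t \<and> t \<le> q) * c + int q * of_bool (t = q + 1) * d"
    using card_neighbours_colour[OF y, of 1] card_neighbours_colour[OF y, of 2] f2 by simp
  finally show ?thesis .
qed

lemma sum_free_neighbours:
  assumes y: "y \<in> hverts n q" and f: "f y = 1"
  shows "(\<Sum>l\<in>free (face_of y). \<Sum>u\<in>{..<q}-{y!l}. if f (y[l:=u]) = 1 then A else B) = int k * (int q - 1) * A"
proof -
  have "(\<Sum>u\<in>{..<q}-{y!l}. if f (y[l:=u]) = 1 then A else B) = (int q - 1) * A"
    if l: "l \<in> free (face_of y)" for l
  proof -
    have "y!l < q" using l free_face_of[OF y f] y by (auto simp: hverts_iff)
    then have "card ({..<q} - {y!l}) = q - 1" by simp
    moreover have "f (y[l:=u]) = 1" if "u \<in> {..<q}-{y!l}" for u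
      using face_of_list_update(1)[OF y f l] that by simp
    ultimately show ?thesis using two_le_q by (simp add: of_nat_diff)
  qed
  then have "(\<Sum>l\<in>free (face_of y). \<Sum>u\<in>{..<q}-{y!l}. if f (y[l:=u]) = 1 then A else B) =
      (\<Sum>l\<in>free (face_of y). (int q - 1) * A)"
    by (rule sum.cong[OF refl])
  then show ?thesis using free_face_of[OF y f] by simp
qed

lemma card_lifted_neighbours_on_faces:
  assumes x: "x \<in> hverts (q*n) q" and f: "f (collapse x) = 1"
    and K: "K = free (face_of (collapse x))"
  shows "int (card {x'\<in>hverts (q*n) q. hadj x x' \<and> lift_colour e x' = t}) =
    (\<Sum>l\<in>K. \<Sum>u\<in>{..<q}-{collapse x!l}. int q * of_bool (t = 1 + (e * u + rest_weight e K x l) mod q))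
    + of_bool (1 \<le> t \<and> t \<le> q) * (a - int k * (int q - 1)) + int q * of_bool (t = q + 1) * b"
proof -
  let ?y = "collapse x"
  let ?A = "of_bool (1 \<le> t \<and> t \<le> q) :: int" and ?B = "int q * of_bool (t = q + 1)"
  define IN where "IN l u = int q * of_bool (t = 1 + (e * u + rest_weight e K x l) mod q)" for l u
  define OUT where "OUT l u = (if f (?y[l:=u]) = 1 then ?A else ?B)" for l u
  have y: "?y \<in> hverts n q" by (rule collapse_in_hverts[OF x])
  have K_sub: "K \<subseteq> {..<n}" using free_face_of[OF y f] K by simp
  have "int (neighbour_count e t x l u) = (if l \<in> K then IN l u else OUT l u)"
    if "l < n" "u \<in> {..<q}-{?y!l}" for l u
  proof -
    have "u < q" "u \<noteq> ?y!l" using that(2) by auto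
    from neighbour_count_eq[OF x that(1) this] show ?thesis
      unfolding IN_def OUT_def by (simp only: f K[symmetric] simp_thms)
  qed
  then have "int (card {x'\<in>hverts (q*n) q. hadj x x' \<and> lift_colour e x' = t}) =
      (\<Sum>l<n. if l \<in> K then (\<Sum>u\<in>{..<q}-{?y!l}. IN l u) else (\<Sum>u\<in>{..<q}-{?y!l}. OUT l u))"
    unfolding int_card_lifted_neighbours_colour[OF x] by (intro sum.cong) simp_all
  also have "\<dots> = (\<Sum>l\<in>K. \<Sum>u\<in>{..<q}-{?y!l}. IN l u) + (\<Sum>l\<in>{..<n}-K. \<Sum>u\<in>{..<q}-{?y!l}. OUT l u)"
    using K_sub by (simp add: sum.If_cases Int_absorb1 Diff_eq)
  also have "(\<Sum>l\<in>{..<n}-K. \<Sum>u\<in>{..<q}-{?y!l}. OUT l u) =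
      (\<Sum>l<n. \<Sum>u\<in>{..<q}-{?y!l}. OUT l u) - (\<Sum>l\<in>K. \<Sum>u\<in>{..<q}-{?y!l}. OUT l u)"
    using K_sub by (simp add: sum_diff del: nth_collapse)
  also have "(\<Sum>l<n. \<Sum>u\<in>{..<q}-{?y!l}. OUT l u) =
      ?A * int (card {y'\<in>hverts n q. hadj ?y y' \<and> f y' = 1}) + ?B * int (card {y'\<in>hverts n q. hadj ?y y' \<and> f y' = 2})"
    unfolding OUT_def by (rule sum_neighbours_by_colour[OF y])
  also have "\<dots> = ?A * a + ?B * b"
    using card_neighbours_colour[OF y, of 1] card_neighbours_colour[OF y, of 2] f by simp
  also have "(\<Sum>l\<in>K. \<Sum>u\<in>{..<q}-{?y!l}. OUT l u) = int k * (int q - 1) * ?A"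
    unfolding OUT_def K by (rule sum_free_neighbours[OF y f])
  finally show ?thesis by (simp add: IN_def algebra_simps)
qed

lemma face_part_count_0:
  assumes x: "x \<in> hverts (q*n) q" and f: "f (collapse x) = 1"
    and K: "K = free (face_of (collapse x))"
  shows "(\<Sum>l\<in>K. \<Sum>u\<in>{..<q}-{collapse x!l}. int q * of_bool (t = 1 + (0 * u + rest_weight 0 K x l) mod q))
    = int k * (int q - 1) * int q * of_bool (t = lift_colour 0 x)"
proof -
  have y: "collapse x \<in> hverts n q" by (rule collapse_in_hverts[OF x])
  have K_sub: "K \<subseteq> {..<n}" and card_K: "card K = k" using free_face_of[OF y f] K by simp_all
  have "(\<Sum>u\<in>{..<q}-{collapse x!l}. int q * of_bool (t = 1 + (0 * u + rest_weight 0 K x l) mod q))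
      = (int q - 1) * int q * of_bool (t = lift_colour 0 x)" if l: "l \<in> K" for l
  proof -
    have "l < n" using l K_sub by auto
    then have yl: "collapse x ! l < q" and g: "lift_colour 0 x = 1 + rest_weight 0 K x l mod q"
      using y lift_colour_split[OF f, of l 0] l K by (simp_all add: hverts_iff weight_def)
    have "(\<Sum>u\<in>{..<q}-{collapse x!l}. int q * of_bool (t = 1 + (0 * u + rest_weight 0 K x l) mod q))
        = int (card ({..<q}-{collapse x!l})) * (int q * of_bool (t = lift_colour 0 x))"
      by (simp only: g mult_zero_left add_0 sum_constant)
    also have "card ({..<q}-{collapse x!l}) = q - 1" using yl by simp
    finally show ?thesis using two_le_q by (simp add: of_nat_diff)
  qed
  then have "(\<Sum>l\<in>K. \<Sum>u\<in>{..<q}-{collapse x!l}. int q * of_bool (t = 1 + (0 * u + rest_weight 0 K x l) mod q))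
      = (\<Sum>l\<in>K. (int q - 1) * int q * of_bool (t = lift_colour 0 x))"
    by (rule sum.cong[OF refl])
  also have "\<dots> = int k * (int q - 1) * int q * of_bool (t = lift_colour 0 x)"
    by (simp only: sum_constant card_K mult.assoc)
  finally show ?thesis .
qed

lemma face_part_count_1:
  assumes x: "x \<in> hverts (q*n) q" and f: "f (collapse x) = 1"
    and K: "K = free (face_of (collapse x))"
  shows "(\<Sum>l\<in>K. \<Sum>u\<in>{..<q}-{collapse x!l}. int q * of_bool (t = 1 + (1 * u + rest_weight 1 K x l) mod q))
    = int k * int q * (of_bool (1 \<le> t \<and> t \<le> q) - of_bool (t = lift_colour 1 x))"
proof -
  have y: "collapse x \<in> hverts n q" by (rule collapse_in_hverts[OF x])
  have K_sub: "K \<subseteq> {..<n}" and card_K: "card K = k" using free_face_of[OF y f] K by simp_all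
  have "(\<Sum>u\<in>{..<q}-{collapse x!l}. int q * of_bool (t = 1 + (1 * u + rest_weight 1 K x l) mod q))
      = int q * (of_bool (1 \<le> t \<and> t \<le> q) - of_bool (t = lift_colour 1 x))" if l: "l \<in> K" for l
  proof -
    let ?R = "rest_weight 1 K x l"
    have "l < n" using l K_sub by auto
    then have yl: "collapse x ! l < q" and g: "lift_colour 1 x = 1 + (1 * collapse x ! l + ?R) mod q"
      using y lift_colour_split[OF f, of l 1] l K by (simp_all add: hverts_iff weight_def)
    have "(\<Sum>u\<in>{..<q}-{collapse x!l}. int q * of_bool (t = 1 + (1 * u + ?R) mod q))
        = int q * (\<Sum>u<q. of_bool (t = 1 + (1 * u + ?R) mod q)) - int q * of_bool (t = lift_colour 1 x)"
      using yl by (simp only: sum_diff1[OF finite_lessThan] lessThan_iff if_True g sum_distrib_left)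
    also have "(\<Sum>u<q. of_bool (t = 1 + (1 * u + ?R) mod q) :: int) = int (card {u\<in>{..<q}. 1 + (u + ?R) mod q = t})"
      by (subst sum_of_bool_eq) (simp_all add: Int_def eq_commute)
    also have "card {u\<in>{..<q}. 1 + (u + ?R) mod q = t} = of_bool (1 \<le> t \<and> t \<le> q)"
      by (rule card_add_mod_colours) (use two_le_q in simp)
    finally show ?thesis by (simp add: algebra_simps)
  qed
  then have "(\<Sum>l\<in>K. \<Sum>u\<in>{..<q}-{collapse x!l}. int q * of_bool (t = 1 + (1 * u + rest_weight 1 K x l) mod q))
      = (\<Sum>l\<in>K. int q * (of_bool (1 \<le> t \<and> t \<le> q) - of_bool (t = lift_colour 1 x)))"
    by (rule sum.cong[OF refl])
  also have "\<dots> = int k * int q * (of_bool (1 \<le> t \<and> t \<le> q) - of_bool (t = lift_colour 1 x))"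
    by (simp only: sum_constant card_K mult.assoc)
  finally show ?thesis .
qed

definition assemble :: "(nat \<Rightarrow> nat list) \<Rightarrow> nat list" where
  "assemble B = map (\<lambda>i. B (i div q) ! (i mod q)) [0..<q*n]"

lemma assemble_spec:
  assumes y: "y \<in> hverts n q" and B: "\<And>l. l < n \<Longrightarrow> B l \<in> hverts q q \<and> h (B l) = y!l"
  shows "assemble B \<in> hverts (q*n) q" "\<And>l. l < n \<Longrightarrow> block (assemble B) l = B l"
    "collapse (assemble B) = y"
proof -
  have q: "0 < q" using two_le_q by simp
  show "assemble B \<in> hverts (q*n) q" unfolding hverts_iff
  proof (intro conjI allI impI)
    fix i assume i: "i < q*n"
    then have "i div q < n" using q by (simp add: div_less_iff_less_mult mult.commute)
    then show "assemble B ! i < q" using B q i by (simp add: assemble_def hverts_iff)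
  qed (simp add: assemble_def)
  show blocks: "block (assemble B) l = B l" if l: "l < n" for l
  proof (rule nth_equalityI)
    show "length (block (assemble B) l) = length (B l)" using B l by (simp add: hverts_iff)
    fix j assume "j < length (block (assemble B) l)"
    then have j: "j < q" by simp
    then show "block (assemble B) l ! j = B l ! j"
      using block_index_less[OF l j] by (simp add: assemble_def)
  qed
  show "collapse (assemble B) = y"
    by (rule nth_equalityI) (use y B blocks in \<open>simp_all add: hverts_iff\<close>)
qed

lemma exists_blocks:
  assumes y: "y \<in> hverts n q"
  obtains B where "\<And>l. l < n \<Longrightarrow> B l \<in> hverts q q \<and> h (B l) = y!l"
proof -
  have "\<forall>l\<in>{..<n}. \<exists>w. w \<in> hverts q q \<and> h w = y!l"
  proof
    fix l assume "l \<in> {..<n}"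
    then have "y!l < q" using y by (simp add: hverts_iff)
    then show "\<exists>w. w \<in> hverts q q \<and> h w = y!l" using label_shift_surj[of "y!l" 0] two_le_q by auto
  qed
  then obtain B where "\<forall>l\<in>{..<n}. B l \<in> hverts q q \<and> h (B l) = y!l"
    by (rule bchoice[elim_format]) blast
  then show ?thesis by (intro that[of B]) simp
qed

lemma lift_colour_attains_on_faces:
  assumes t: "1 \<le> t" "t \<le> q"
  obtains x where "x \<in> hverts (q*n) q" "lift_colour e x = t"
proof -
  obtain y where y: "y \<in> hverts n q" "f y = 1" by (rule colour_surj[of 1]) auto
  let ?K = "free (face_of y)"
  have "face_of y \<in> P" using face_of_in[OF y] by simp
  then obtain l0 where l0: "l0 < n" "l0 \<notin> ?K" by (rule exists_fixed_coordinate)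
  obtain B where B: "\<And>l. l < n \<Longrightarrow> B l \<in> hverts q q \<and> h (B l) = y!l" using exists_blocks[OF y(1)] by blast
  let ?R = "\<Sum>l\<in>{..<n}-{l0}. weight e ?K l (B l)"
  have "t - 1 < q" using t by simp
  then have "t - 1 \<in> (\<lambda>s. (s + ?R) mod q) ` {..<q}"
    using bij_betw_add_mod[of q ?R] two_le_q by (simp add: bij_betw_def)
  then obtain s where s: "s < q" "(s + ?R) mod q = t - 1" by auto
  have "y!l0 < q" using y l0 by (simp add: hverts_iff)
  then obtain w where w: "w \<in> hverts q q" "h w = y!l0" "\<sigma> w = s"
    using s(1) by (rule label_shift_surj)
  let ?B = "B(l0 := w)"
  have "?B l \<in> hverts q q \<and> h (?B l) = y!l" if "l < n" for l
    using B[OF that] w by simp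
  note x = assemble_spec[of y ?B, OF y(1) this]
  have "rest_weight e ?K (assemble ?B) l0 = ?R"
    unfolding rest_weight_def using x(2) by (intro sum.cong) simp_all
  then have "lift_colour e (assemble ?B) = 1 + (s + ?R) mod q"
    using lift_colour_split[of "assemble ?B" l0 e] x(2,3) y(2) l0 w by (simp add: weight_def)
  also have "\<dots> = t" using s t by simp
  finally show ?thesis using x(1) that by blast
qed

lemma lift_colour_image: "lift_colour e ` hverts (q*n) q = {1..q+1}"
proof
  show "lift_colour e ` hverts (q*n) q \<subseteq> {1..q+1}"
  proof (rule image_subsetI)
    fix x show "lift_colour e x \<in> {1..q+1}"
      using lift_colour_on_faces[of x e] lift_colour_off_faces[of x e] by (cases "f (collapse x) = 1") auto
  qed
  show "{1..q+1} \<subseteq> lift_colour e ` hverts (q*n) q"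
  proof
    fix t assume t: "t \<in> {1..q+1}"
    show "t \<in> lift_colour e ` hverts (q*n) q"
    proof (cases "t = q + 1")
      case True
      obtain y where y: "y \<in> hverts n q" "f y = 2" by (rule colour_surj[of 2]) auto
      obtain B where "\<And>l. l < n \<Longrightarrow> B l \<in> hverts q q \<and> h (B l) = y!l" using exists_blocks[OF y(1)] by blast
      note x = assemble_spec[OF y(1) this]
      then have "lift_colour e (assemble B) = t" using True y(2) by (simp add: lift_colour_off_faces)
      with x(1) show ?thesis by (blast intro: rev_image_eqI)
    next
      case False
      with t obtain x where "x \<in> hverts (q*n) q" "lift_colour e x = t"
        using lift_colour_attains_on_faces[of t e] by auto
      then show ?thesis by (blast intro: rev_image_eqI)
    qed
  qed
qed

lemma perfect_coloring_lift_colour: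
  assumes on_faces: "\<And>x t. x \<in> hverts (q*n) q \<Longrightarrow> f (collapse x) = 1 \<Longrightarrow> 1 \<le> t \<Longrightarrow> t \<le> q \<Longrightarrow>
      int (card {x'\<in>hverts (q*n) q. hadj x x' \<and> lift_colour e x' = t}) = (if lift_colour e x = t then diag else off)"
  shows "perfect_coloring (q*n) q (q+1) (lift_colour e)
    (\<lambda>i j. if i \<le> q \<and> j \<le> q then (if i = j then diag else off)
           else if i \<le> q then int q * b else if j \<le> q then c else int q * d)"
  unfolding perfect_coloring_def
proof (intro conjI ballI)
  show "lift_colour e ` hverts (q*n) q = {1..q+1}" by (rule lift_colour_image)
  fix x t assume x: "x \<in> hverts (q*n) q" and t: "t \<in> {1..q+1}"
  show "int (card {x'\<in>hverts (q*n) q. hadj x x' \<and> lift_colour e x' = t}) =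
    (if lift_colour e x \<le> q \<and> t \<le> q then (if lift_colour e x = t then diag else off)
     else if lift_colour e x \<le> q then int q * b else if t \<le> q then c else int q * d)"
  proof (cases "f (collapse x) = 1")
    case f: True
    then have g: "1 \<le> lift_colour e x" "lift_colour e x \<le> q" using lift_colour_on_faces by auto
    show ?thesis
    proof (cases "t \<le> q")
      case True
      then show ?thesis using on_faces[OF x f] t g by simp
    next
      case False
      then have "t = q + 1" using t by simp
      moreover have "q \<noteq> m mod q" for m
        using mod_less_divisor[of q m] two_le_q by (metis less_irrefl zero_less_numeral less_le_trans)
      ultimately show ?thesis using card_lifted_neighbours_on_faces[OF x f refl, of e t] g by simp
    qed
  next
    case False
    then show ?thesis using card_lifted_neighbours_off_faces[OF x False, of e t] lift_colour_off_faces[OF False] t by auto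
  qed
qed

theorem perfect_coloring_lift_colour_1:
  "perfect_coloring (q*n) q (q+1) (lift_colour 1)
    (\<lambda>i j. if i \<le> q \<and> j \<le> q then (if i = j then a - int k * (int q - 1) else a + int k)
           else if i \<le> q then int q * b else if j \<le> q then c else int q * d)"
proof (rule perfect_coloring_lift_colour)
  fix x t assume x: "x \<in> hverts (q*n) q" and f: "f (collapse x) = 1" and t: "1 \<le> t" "t \<le> q"
  show "int (card {x'\<in>hverts (q*n) q. hadj x x' \<and> lift_colour 1 x' = t}) =
      (if lift_colour 1 x = t then a - int k * (int q - 1) else a + int k)"
  proof -
    note count = card_lifted_neighbours_on_faces[OF x f refl, of 1 t, unfolded face_part_count_1[OF x f refl, of t]]
    have "of_bool (1 \<le> t \<and> t \<le> q) = (1::int)" "of_bool (t = q + 1) = (0::int)" using t by auto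
    with count show ?thesis by (cases "lift_colour 1 x = t") (simp_all add: algebra_simps)
  qed
qed

theorem perfect_coloring_lift_colour_0:
  "perfect_coloring (q*n) q (q+1) (lift_colour 0)
    (\<lambda>i j. if i \<le> q \<and> j \<le> q then (if i = j then a + int k * (int q - 1)^2 else a - int k * (int q - 1))
           else if i \<le> q then int q * b else if j \<le> q then c else int q * d)"
proof (rule perfect_coloring_lift_colour)
  fix x t assume x: "x \<in> hverts (q*n) q" and f: "f (collapse x) = 1" and t: "1 \<le> t" "t \<le> q"
  show "int (card {x'\<in>hverts (q*n) q. hadj x x' \<and> lift_colour 0 x' = t}) =
      (if lift_colour 0 x = t then a + int k * (int q - 1)^2 else a - int k * (int q - 1))"
  proof -
    note count = card_lifted_neighbours_on_faces[OF x f refl, of 0 t, unfolded face_part_count_0[OF x f refl, of t]]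
    have "of_bool (1 \<le> t \<and> t \<le> q) = (1::int)" "of_bool (t = q + 1) = (0::int)" using t by auto
    with count have "int (card {x'\<in>hverts (q*n) q. hadj x x' \<and> lift_colour 0 x' = t}) =
        int k * (int q - 1) * int q * of_bool (t = lift_colour 0 x) + (a - int k * (int q - 1))"
      by simp
    moreover have "int k * (int q - 1) * int q + (a - int k * (int q - 1)) = a + int k * (int q - 1)^2"
      by (simp add: power2_eq_square algebra_simps)
    ultimately show ?thesis by auto
  qed
qed

end

theorem lemma9:
  fixes n q k :: nat and a b c d :: int and f :: "nat list \<Rightarrow> nat"
  assumes "perfect_coloring n q 2 f
             (\<lambda>i j. if i = 1 then (if j = 1 then a else b) else (if j = 1 then c else d))"
    and "partitionable_into_faces n q k {x \<in> hverts n q. f x = 1}"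
    and "\<exists>C. perfect_code (q + 1) q C"
  shows "\<exists>g' g''.
     perfect_coloring (q * n) q (q + 1) g'
       (\<lambda>i j. if i \<le> q \<and> j \<le> q then (if i = j then a - int k * (int q - 1) else a + int k)
              else if i \<le> q then int q * b
              else if j \<le> q then c
              else int q * d) \<and>
     perfect_coloring (q * n) q (q + 1) g''
       (\<lambda>i j. if i \<le> q \<and> j \<le> q then (if i = j then a + int k * (int q - 1)^2 else a - int k * (int q - 1))
              else if i \<le> q then int q * b
              else if j \<le> q then c
              else int q * d)"
proof -
  have q: "2 \<le> q" using assms(1) by (rule two_le_q_if_perfect_coloring) simp
  obtain C where "perfect_code (q + 1) q C" using assms(3) by blast
  then interpret code_labelling q C using q by unfold_locales
  obtain P free where "\<And>F G. F \<in> P \<Longrightarrow> G \<in> P \<Longrightarrow> F \<noteq> G \<Longrightarrow> F \<inter> G = {}"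
    "\<Union>P = {x \<in> hverts n q. f x = 1}" "\<And>F. F \<in> P \<Longrightarrow> free F \<subseteq> {..<n}"
    "\<And>F. F \<in> P \<Longrightarrow> card (free F) = k"
    "\<And>F. F \<in> P \<Longrightarrow> \<exists>v\<in>hverts n q. F = {y \<in> hverts n q. \<forall>i<n. i \<notin> free F \<longrightarrow> y!i = v!i}"
    using assms(2) by (rule partitionable_into_facesE) blast
  then interpret lifted_colouring q label shift n k f P free a b c d
    using assms(1) by unfold_locales
  show ?thesis using perfect_coloring_lift_colour_1 perfect_coloring_lift_colour_0 by blast
qed

end
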